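(* Let $k\ge 2$ and let $G=K_{n_1,n_2,\ldots,n_k}$ be the complete $k$-partite graph with part sizes $n_1,\dots,n_k$, where $n_i\ge 2$ for every $1\le i\le k$. Then $$\mathcal{R}(G)=\sum_{i=1}^k n_i\left(\frac{n_i-1}{n_i}+\sum_{\substack{t=1\\ t\neq i}}^k n_t\right)^{-1}\left(\frac{n_i-1}{2n_i}+\sum_{\substack{t=1\\ t\neq i}}^k\frac{n_t}{n_i+n_t}\right).$$
   Context: All graphs are finite, simple and connected, with at least two vertices; $d(u,v)$ denotes the shortest-path distance. $V_p$ denotes the set of all unordered pairs $(u,v)$ of distinct vertices. A vertex $x$ resolves the pair $(u,v)$ if $d(x,u)\neq d(x,v)$. For $(u,v)\in V_p$, $R(u,v)$ is the set of all vertices resolving $(u,v)$ (it always contains $u$ and $v$). The resolving share of a vertex $w$ for $(u,v)$ is $r_w(u,v)=\frac{1}{|R(u,v)|}$ if $w$ resolves $u$ and $v$, and $r_w(u,v)=0$ otherwise. For a vertex $w$, $R(w)$ is the set of pairs in $V_p$ resolved by $w$. The average resolving share of $w$ is $ar_w(G)=\frac{1}{|R(w)|}\sum_{(u,v)\in R(w)} r_w(u,v)$, and the resolving topological index of $G$ is $\mathcal{R}(G)=\sum_{w\in V(G)} ar_w(G)$. *)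

theory Defs
  imports Complex_Main
begin

text \<open>A simple graph is given by a finite vertex set V and a symmetric irreflexive
edge predicate E with edges only between vertices of V.\<close>

definition graph_dist :: "('a \<Rightarrow> 'a \<Rightarrow> bool) \<Rightarrow> 'a \<Rightarrow> 'a \<Rightarrow> nat" where
  "graph_dist E u v = (LEAST n. (E ^^ n) u v)"

definition resolves :: "('a \<Rightarrow> 'a \<Rightarrow> bool) \<Rightarrow> 'a \<Rightarrow> 'a set \<Rightarrow> bool" where
  "resolves E x p = (\<exists>u v. p = {u, v} \<and> graph_dist E x u \<noteq> graph_dist E x v)"

definition vpairs :: "'a set \<Rightarrow> 'a set set" where
  "vpairs V = {{u, v} | u v. u \<in> V \<and> v \<in> V \<and> u \<noteq> v}"

definition resolving_set :: "'a set \<Rightarrow> ('a \<Rightarrow> 'a \<Rightarrow> bool) \<Rightarrow> 'a set \<Rightarrow> 'a set" where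
  "resolving_set V E p = {x \<in> V. resolves E x p}"

definition resolving_share :: "'a set \<Rightarrow> ('a \<Rightarrow> 'a \<Rightarrow> bool) \<Rightarrow> 'a \<Rightarrow> 'a set \<Rightarrow> real" where
  "resolving_share V E w p =
     (if resolves E w p then 1 / real (card (resolving_set V E p)) else 0)"

definition resolved_pairs :: "'a set \<Rightarrow> ('a \<Rightarrow> 'a \<Rightarrow> bool) \<Rightarrow> 'a \<Rightarrow> 'a set set" where
  "resolved_pairs V E w = {p \<in> vpairs V. resolves E w p}"

definition avg_resolving_share :: "'a set \<Rightarrow> ('a \<Rightarrow> 'a \<Rightarrow> bool) \<Rightarrow> 'a \<Rightarrow> real" where
  "avg_resolving_share V E w =
     (1 / real (card (resolved_pairs V E w))) *
     (\<Sum>p\<in>resolved_pairs V E w. resolving_share V E w p)"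

definition resolving_index :: "'a set \<Rightarrow> ('a \<Rightarrow> 'a \<Rightarrow> bool) \<Rightarrow> real" where
  "resolving_index V E = (\<Sum>w\<in>V. avg_resolving_share V E w)"

text \<open>Complete k-partite graph with parts of sizes n 0, ..., n (k-1):
vertex (i,j) is the j-th vertex of part i; two vertices are adjacent iff they lie in
different parts.\<close>
definition kpart_V :: "nat \<Rightarrow> (nat \<Rightarrow> nat) \<Rightarrow> (nat \<times> nat) set" where
  "kpart_V k n = {(i, j). i < k \<and> j < n i}"

definition kpart_E :: "nat \<Rightarrow> (nat \<Rightarrow> nat) \<Rightarrow> nat \<times> nat \<Rightarrow> nat \<times> nat \<Rightarrow> bool" where
  "kpart_E k n x y = (x \<in> kpart_V k n \<and> y \<in> kpart_V k n \<and> fst x \<noteq> fst y)"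

end

theory Submission
  imports Defs
begin

text \<open>In a complete multipartite graph two distinct vertices are at distance 1 if they lie in
different parts and at distance 2 otherwise. Hence \<open>w\<close> resolves \<open>{a, b}\<close> iff \<open>w \<in> {a, b}\<close>
or exactly one of \<open>a, b\<close> lies in the part of \<open>w\<close>, and \<open>R(a, b)\<close> is \<open>{a, b}\<close> when \<open>a, b\<close>
share a part and the union of their two parts otherwise. For \<open>w\<close> in part \<open>i\<close> the resolved
pairs are therefore the pairs \<open>{w, x}\<close> together with the pairs joining part \<open>i\<close> minus \<open>w\<close> to
the other parts, with shares \<open>1/2\<close> or \<open>1/(n\<^sub>i + n\<^sub>t)\<close>. Counting both kinds gives an average
share depending only on \<open>i\<close>, which is then summed over the \<open>n\<^sub>i\<close> vertices of each part.\<close>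

lemma graph_dist_self: "graph_dist E x x = 0"
  unfolding graph_dist_def by (simp add: Least_eq_0)

lemma graph_dist_eq_1:
  assumes "x \<noteq> y" and "E x y"
  shows "graph_dist E x y = 1"
  unfolding graph_dist_def
proof (rule Least_equality)
  show "(E ^^ 1) x y" using assms(2) by (auto simp: relcompp_apply)
next
  fix m assume "(E ^^ m) x y"
  then show "1 \<le> m" using assms(1) by (cases m) auto
qed

lemma graph_dist_eq_2:
  assumes "x \<noteq> y" and "\<not> E x y" and "E x z" and "E z y"
  shows "graph_dist E x y = 2"
  unfolding graph_dist_def
proof (rule Least_equality)
  show "(E ^^ 2) x y" using assms(3,4) by (auto simp: numeral_2_eq_2 relcompp_apply)
next
  fix m assume "(E ^^ m) x y"
  then show "2 \<le> m" using assms(1,2) by (cases m; cases "m - 1") auto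
qed

lemma resolves_doubleton_iff:
  "resolves E w {a, b} \<longleftrightarrow> graph_dist E w a \<noteq> graph_dist E w b"
  unfolding resolves_def by (auto simp: doubleton_eq_iff)

lemma doubleton_in_vpairs: "u \<in> V \<Longrightarrow> v \<in> V \<Longrightarrow> u \<noteq> v \<Longrightarrow> {u, v} \<in> vpairs V"
  unfolding vpairs_def by blast

lemma sum_doubletons_disjoint_Un:
  assumes "finite X" "finite A" "finite B" "A \<inter> B = {}" "w \<notin> A \<union> B"
  shows "sum g ((\<lambda>x. {w, x}) ` X \<union> (\<lambda>(a, b). {a, b}) ` (A \<times> B)) =
    (\<Sum>x\<in>X. g {w, x}) + (\<Sum>a\<in>A. \<Sum>b\<in>B. g {a, b})"
proof -
  have inj_left: "inj_on (\<lambda>x. {w, x}) X"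
    by (auto simp: inj_on_def doubleton_eq_iff)
  have inj_cross: "inj_on (\<lambda>(a, b). {a, b}) (A \<times> B)"
    using assms(4) by (auto simp: inj_on_def doubleton_eq_iff)
  have "(\<lambda>x. {w, x}) ` X \<inter> (\<lambda>(a, b). {a, b}) ` (A \<times> B) = {}"
    using assms(5) by (auto simp: doubleton_eq_iff)
  then have "sum g ((\<lambda>x. {w, x}) ` X \<union> (\<lambda>(a, b). {a, b}) ` (A \<times> B)) =
      sum g ((\<lambda>x. {w, x}) ` X) + sum g ((\<lambda>(a, b). {a, b}) ` (A \<times> B))"
    using assms(1-3) by (simp add: sum.union_disjoint)
  also have "\<dots> = (\<Sum>x\<in>X. g {w, x}) + (\<Sum>a\<in>A. \<Sum>b\<in>B. g {a, b})"
    by (simp add: sum.reindex[OF inj_left] sum.reindex[OF inj_cross] sum.cartesian_product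
        prod.case_distrib)
  finally show ?thesis .
qed

definition kpart_part :: "(nat \<Rightarrow> nat) \<Rightarrow> nat \<Rightarrow> (nat \<times> nat) set" where
  "kpart_part n i = {i} \<times> {..<n i}"

lemma card_kpart_part: "card (kpart_part n i) = n i"
  by (simp add: kpart_part_def card_cartesian_product)

lemma real_card_kpart_part_minus:
  assumes "w \<in> kpart_part n i"
  shows "real (card (kpart_part n i - {w})) = real (n i) - 1"
proof -
  have "0 < n i" using assms by (auto simp: kpart_part_def)
  then show ?thesis
    using assms card_kpart_part[of n i] by (simp add: kpart_part_def of_nat_diff)
qed

context
  fixes k :: nat and n :: "nat \<Rightarrow> nat"
  assumes two_parts: "k \<ge> 2" and parts_nonempty: "\<And>i. i < k \<Longrightarrow> 0 < n i"
begin

abbreviation "V \<equiv> kpart_V k n"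
abbreviation "E \<equiv> kpart_E k n"
abbreviation "part \<equiv> kpart_part n"

lemma kpart_V_Sigma: "V = Sigma {..<k} (\<lambda>i. {..<n i})"
  by (auto simp: kpart_V_def)

lemma finite_kpart_V: "finite V"
  by (simp add: kpart_V_Sigma)

lemma kpart_part_subset: "i < k \<Longrightarrow> part i \<subseteq> V"
  by (auto simp: kpart_V_def kpart_part_def)

lemma mem_kpart_part_fst: "w \<in> V \<Longrightarrow> w \<in> part (fst w)"
  by (auto simp: kpart_V_def kpart_part_def)

lemma fst_kpart_V_less: "w \<in> V \<Longrightarrow> fst w < k"
  by (auto simp: kpart_V_def)

lemma kpart_dist:
  assumes x: "x \<in> V" and y: "y \<in> V"
  shows "graph_dist E x y = (if x = y then 0 else if fst x = fst y then 2 else 1)"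
proof (cases "x = y \<or> fst x \<noteq> fst y")
  case True
  then show ?thesis
    using x y graph_dist_eq_1[of x y E] by (auto simp: graph_dist_self kpart_E_def)
next
  case False
  define j where "j = (if fst x = 0 then 1 else 0 :: nat)"
  have "j < k" "j \<noteq> fst x" using two_parts by (auto simp: j_def)
  then have "(j, 0) \<in> V" "fst x \<noteq> j"
    using parts_nonempty by (auto simp: kpart_V_def)
  then have "graph_dist E x y = 2"
    using False x y by (intro graph_dist_eq_2[of _ _ _ "(j, 0)"]) (auto simp: kpart_E_def)
  with False show ?thesis by simp
qed

lemma resolves_kpart_iff:
  assumes "w \<in> V" "a \<in> V" "b \<in> V" "a \<noteq> b"
  shows "resolves E w {a, b} \<longleftrightarrow> w = a \<or> w = b \<or> (fst a = fst w \<longleftrightarrow> fst b \<noteq> fst w)"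
  using assms by (auto simp: resolves_doubleton_iff kpart_dist)

lemma resolving_set_kpart:
  assumes a: "a \<in> V" and b: "b \<in> V" and "a \<noteq> b"
  shows "resolving_set V E {a, b} = (if fst a = fst b then {a, b} else part (fst a) \<union> part (fst b))"
proof -
  have "x \<in> resolving_set V E {a, b} \<longleftrightarrow> x \<in> part (fst a) \<union> part (fst b)"
    if "fst a \<noteq> fst b" for x
    using that assms kpart_part_subset[OF fst_kpart_V_less[OF a]]
      kpart_part_subset[OF fst_kpart_V_less[OF b]]
    by (cases x) (auto simp: resolving_set_def resolves_kpart_iff kpart_part_def kpart_V_def)
  then show ?thesis
    using assms by (auto simp: resolving_set_def resolves_kpart_iff)
qed

lemma resolving_share_kpart:
  assumes "a \<in> V" "b \<in> V" "a \<noteq> b" "resolves E w {a, b}"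
  shows "resolving_share V E w {a, b} =
    (if fst a = fst b then 1 / 2 else 1 / (real (n (fst a)) + real (n (fst b))))"
proof -
  have "fst a \<noteq> fst b \<Longrightarrow> card (part (fst a) \<union> part (fst b)) = n (fst a) + n (fst b)"
    by (subst card_Un_disjoint) (auto simp: kpart_part_def card_kpart_part[unfolded kpart_part_def])
  then show ?thesis
    using assms by (simp add: resolving_share_def resolving_set_kpart)
qed

lemma resolved_pairs_kpart:
  assumes w: "w \<in> V"
  shows "resolved_pairs V E w = (\<lambda>x. {w, x}) ` (V - {w}) \<union>
    (\<lambda>(a, b). {a, b}) ` ((part (fst w) - {w}) \<times> (V - part (fst w)))"
    (is "_ = ?L \<union> ?C")
proof (rule set_eqI, rule iffI)
  fix p assume "p \<in> resolved_pairs V E w"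
  then obtain a b where p: "p = {a, b}" and ab: "a \<in> V" "b \<in> V" "a \<noteq> b"
    and r: "resolves E w {a, b}"
    by (auto simp: resolved_pairs_def vpairs_def)
  have "p \<in> ?L" if "w = a \<or> w = b"
    using that p ab by (auto simp: insert_commute)
  moreover have "p \<in> ?C" if "fst a = fst w" "fst b \<noteq> fst w" "w \<noteq> a"
    using that p ab by (cases a, cases b) (auto simp: kpart_part_def kpart_V_def)
  moreover have "p \<in> ?C" if "fst b = fst w" "fst a \<noteq> fst w" "w \<noteq> b"
    using that p ab by (cases a, cases b)
      (auto simp: kpart_part_def kpart_V_def insert_commute intro!: image_eqI[where x = "(b, a)"])
  ultimately show "p \<in> ?L \<union> ?C"
    using r by (auto simp: resolves_kpart_iff[OF w ab])
next
  fix p assume "p \<in> ?L \<union> ?C"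
  then consider x where "p = {w, x}" "x \<in> V" "x \<noteq> w"
    | a b where "p = {a, b}" "a \<in> part (fst w) - {w}" "b \<in> V - part (fst w)"
    by (elim UnE imageE SigmaE) (simp_all only: prod.case, blast+)
  then show "p \<in> resolved_pairs V E w"
  proof cases
    case 1
    then show ?thesis
      using w by (simp add: resolved_pairs_def doubleton_in_vpairs resolves_kpart_iff)
  next
    case (2 a b)
    then have "a \<in> V" "fst a = fst w" "fst b \<noteq> fst w"
      using kpart_part_subset[OF fst_kpart_V_less[OF w]]
      by (cases b; auto simp: kpart_part_def kpart_V_def)+
    moreover have "b \<in> V" "a \<noteq> b" using 2 calculation by auto
    ultimately show ?thesis
      using 2 w by (simp add: resolved_pairs_def doubleton_in_vpairs resolves_kpart_iff)
  qed
qed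

lemma sum_kpart_V_minus_part:
  assumes "i < k"
  shows "(\<Sum>x\<in>V - part i. f (fst x)) = (\<Sum>t\<in>{..<k} - {i}. real (n t) * f t)"
proof -
  have "V - part i = Sigma ({..<k} - {i}) (\<lambda>t. {..<n t})"
    by (auto simp: kpart_V_def kpart_part_def)
  then have "(\<Sum>x\<in>V - part i. f (fst x)) =
      (\<Sum>(t, j)\<in>Sigma ({..<k} - {i}) (\<lambda>t. {..<n t}). f t)"
    by (simp add: case_prod_beta)
  also have "\<dots> = (\<Sum>t\<in>{..<k} - {i}. \<Sum>j<n t. f t)"
    by (rule sum.Sigma[symmetric]) auto
  finally show ?thesis by simp
qed

lemma sum_kpart_V_minus_vertex:
  assumes w: "w \<in> V"
  shows "(\<Sum>x\<in>V - {w}. h x) =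
    (\<Sum>x\<in>part (fst w) - {w}. h x) + (\<Sum>x\<in>V - part (fst w). h x)"
proof -
  have "V - {w} = (part (fst w) - {w}) \<union> (V - part (fst w))"
    using kpart_part_subset[OF fst_kpart_V_less[OF w]] mem_kpart_part_fst[OF w] by blast
  then show ?thesis
    using finite_kpart_V by (simp add: sum.union_disjoint Diff_Int_distrib2 kpart_part_def)
qed

lemma sum_resolved_pairs_kpart:
  assumes w: "w \<in> V"
  shows "sum g (resolved_pairs V E w) = (\<Sum>x\<in>V - {w}. g {w, x}) +
    (\<Sum>a\<in>part (fst w) - {w}. \<Sum>b\<in>V - part (fst w). g {a, b})"
  unfolding resolved_pairs_kpart[OF w]
  using finite_kpart_V mem_kpart_part_fst[OF w]
  by (intro sum_doubletons_disjoint_Un) (auto simp: kpart_part_def)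

lemma card_resolved_pairs_kpart:
  assumes i: "i < k" and w: "w \<in> part i"
  shows "real (card (resolved_pairs V E w)) =
    real (n i) * ((real (n i) - 1) / real (n i) + (\<Sum>t\<in>{..<k} - {i}. real (n t)))"
proof -
  have wV: "w \<in> V" and fst_w: "fst w = i"
    using w kpart_part_subset[OF i] by (auto simp: kpart_part_def)
  have "real (card (resolved_pairs V E w)) =
      real (card (V - {w})) + real (card (part i - {w})) * real (card (V - part i))"
    using sum_resolved_pairs_kpart[OF wV, of "\<lambda>_. 1 :: real"] by (simp add: fst_w)
  also have "\<dots> = real (n i) - 1 + (\<Sum>t\<in>{..<k} - {i}. real (n t)) +
      (real (n i) - 1) * (\<Sum>t\<in>{..<k} - {i}. real (n t))"
    using sum_kpart_V_minus_vertex[OF wV, of "\<lambda>_. 1 :: real"]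
      sum_kpart_V_minus_part[OF i, of "\<lambda>_. 1"]
    by (simp add: fst_w real_card_kpart_part_minus[OF w])
  also have "\<dots> = real (n i) * ((real (n i) - 1) / real (n i) + (\<Sum>t\<in>{..<k} - {i}. real (n t)))"
    using parts_nonempty[OF i] by (simp add: field_simps)
  finally show ?thesis .
qed

lemma sum_resolving_share_kpart:
  assumes i: "i < k" and w: "w \<in> part i"
  shows "(\<Sum>p\<in>resolved_pairs V E w. resolving_share V E w p) =
    real (n i) * ((real (n i) - 1) / (2 * real (n i)) +
      (\<Sum>t\<in>{..<k} - {i}. real (n t) / (real (n i) + real (n t))))"
proof -
  define T where "T = (\<Sum>t\<in>{..<k} - {i}. real (n t) / (real (n i) + real (n t)))"
  have wV: "w \<in> V" and fst_w: "fst w = i"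
    using w kpart_part_subset[OF i] by (auto simp: kpart_part_def)
  have share_vertex: "resolving_share V E w {w, x} =
      (if fst x = i then 1 / 2 else 1 / (real (n i) + real (n (fst x))))" if "x \<in> V - {w}" for x
    using that wV by (auto simp: resolving_share_kpart resolves_kpart_iff fst_w)
  have share_cross: "resolving_share V E w {a, b} = 1 / (real (n i) + real (n (fst b)))"
    if "a \<in> part i - {w}" "b \<in> V - part i" for a b
  proof -
    have ab: "a \<in> V" "b \<in> V" "fst a = i" "fst b \<noteq> i"
      using that kpart_part_subset[OF i] by (cases b; auto simp: kpart_part_def kpart_V_def)+
    then have "a \<noteq> b" by auto
    moreover have "resolves E w {a, b}"
      using resolves_kpart_iff[OF wV ab(1,2) \<open>a \<noteq> b\<close>] ab(3,4) by (simp add: fst_w)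
    ultimately show ?thesis
      using ab by (simp add: resolving_share_kpart)
  qed
  have same_part: "(\<Sum>x\<in>part i - {w}.
      if fst x = i then 1 / 2 else 1 / (real (n i) + real (n (fst x)))) = (real (n i) - 1) / 2"
    using real_card_kpart_part_minus[OF w]
    by (subst sum.cong[OF refl, of _ _ "\<lambda>_. 1 / 2"]) (auto simp: kpart_part_def)
  have other_parts: "(\<Sum>x\<in>V - part i.
      if fst x = i then 1 / 2 else 1 / (real (n i) + real (n (fst x)))) = T"
    using sum_kpart_V_minus_part[OF i,
        of "\<lambda>t. if t = i then 1 / 2 else 1 / (real (n i) + real (n t))"]
    unfolding T_def by (auto intro: sum.cong)
  have cross: "(\<Sum>b\<in>V - part i. 1 / (real (n i) + real (n (fst b)))) = T"
    using sum_kpart_V_minus_part[OF i, of "\<lambda>t. 1 / (real (n i) + real (n t))"]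
    unfolding T_def by simp
  have "(\<Sum>p\<in>resolved_pairs V E w. resolving_share V E w p) =
      (\<Sum>x\<in>V - {w}. if fst x = i then 1 / 2 else 1 / (real (n i) + real (n (fst x)))) +
      (\<Sum>a\<in>part i - {w}. \<Sum>b\<in>V - part i. 1 / (real (n i) + real (n (fst b))))"
    using share_vertex share_cross by (simp add: sum_resolved_pairs_kpart[OF wV] fst_w)
  also have "\<dots> = (real (n i) - 1) / 2 + T + (real (n i) - 1) * T"
    using real_card_kpart_part_minus[OF w]
    by (simp add: sum_kpart_V_minus_vertex[OF wV] fst_w same_part other_parts cross)
  also have "\<dots> = real (n i) * ((real (n i) - 1) / (2 * real (n i)) + T)"
    using parts_nonempty[OF i] by (simp add: field_simps)
  finally show ?thesis unfolding T_def .
qed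

lemma avg_resolving_share_kpart:
  assumes "i < k" and "w \<in> part i"
  shows "avg_resolving_share V E w =
    inverse ((real (n i) - 1) / real (n i) + (\<Sum>t\<in>{..<k} - {i}. real (n t))) *
    ((real (n i) - 1) / (2 * real (n i)) +
     (\<Sum>t\<in>{..<k} - {i}. real (n t) / (real (n i) + real (n t))))"
proof -
  have cancel: "1 / (a * X) * (a * Y) = inverse X * Y" if "a \<noteq> 0" for a X Y :: real
    using that by (simp add: divide_inverse mult.commute)
  show ?thesis
    unfolding avg_resolving_share_def card_resolved_pairs_kpart[OF assms]
      sum_resolving_share_kpart[OF assms]
    using parts_nonempty[OF assms(1)] by (intro cancel) simp
qed

lemma resolving_index_kpart:
  "resolving_index V E =
    (\<Sum>i<k. real (n i) *
       inverse ((real (n i) - 1) / real (n i) + (\<Sum>t\<in>{..<k} - {i}. real (n t))) *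
       ((real (n i) - 1) / (2 * real (n i)) +
        (\<Sum>t\<in>{..<k} - {i}. real (n t) / (real (n i) + real (n t)))))"
proof -
  define F where "F i = inverse ((real (n i) - 1) / real (n i) + (\<Sum>t\<in>{..<k} - {i}. real (n t))) *
    ((real (n i) - 1) / (2 * real (n i)) +
     (\<Sum>t\<in>{..<k} - {i}. real (n t) / (real (n i) + real (n t))))" for i
  have "resolving_index V E = (\<Sum>w\<in>V. F (fst w))"
    unfolding resolving_index_def F_def using fst_kpart_V_less mem_kpart_part_fst
    by (intro sum.cong) (simp_all add: avg_resolving_share_kpart)
  also have "\<dots> = (\<Sum>(i, j)\<in>Sigma {..<k} (\<lambda>i. {..<n i}). F i)"
    by (simp add: kpart_V_Sigma split_beta)
  also have "\<dots> = (\<Sum>i<k. \<Sum>j<n i. F i)"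
    by (rule sum.Sigma[symmetric]) auto
  finally show ?thesis
    by (simp add: F_def mult.assoc)
qed

end

theorem theorem3p10:
  fixes k :: nat and n :: "nat \<Rightarrow> nat"
  assumes "k \<ge> 2" and "\<And>i. i < k \<Longrightarrow> n i \<ge> 2"
  shows "resolving_index (kpart_V k n) (kpart_E k n) =
    (\<Sum>i<k. real (n i) *
       inverse ((real (n i) - 1) / real (n i) + (\<Sum>t\<in>{..<k} - {i}. real (n t))) *
       ((real (n i) - 1) / (2 * real (n i)) +
        (\<Sum>t\<in>{..<k} - {i}. real (n t) / (real (n i) + real (n t)))))"
  using assms by (intro resolving_index_kpart) force+

end
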